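(* Let $K$ be a field, $S=K[x_1,\ldots,x_n]$, and $\alpha=(k_1,\ldots,k_n)\in\mathbb N^n$. A monomial ideal $I\subset S$ has linear quotients if and only if its expansion $I^\alpha\subset S^\alpha$ has linear quotients.
   Context: $\mathbb N$ denotes the positive integers. For $\alpha=(k_1,\ldots,k_n)\in\mathbb N^n$ let $S^\alpha=K[x_{ij}:1\le i\le n,\ 1\le j\le k_i]$ and $P_i=(x_{i1},\ldots,x_{ik_i})\subset S^\alpha$. If $I$ is a monomial ideal with minimal monomial generating set $G(I)=\{\mathbf x^{\mathbf a_1},\ldots,\mathbf x^{\mathbf a_r}\}$, its expansion is $I^\alpha=\sum_{l=1}^r P_1^{\mathbf a_l(1)}\cdots P_n^{\mathbf a_l(n)}\subset S^\alpha$. A monomial ideal $I$ has linear quotients with respect to an ordering $u_1,\ldots,u_r$ of its minimal monomial generators if for all $j=2,\ldots,r$ the colon ideal $(u_1,\ldots,u_{j-1}):(u_j)$ is generated by variables; $I$ has linear quotients if it has linear quotients with respect to some ordering of $G(I)$. *)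

theory Defs
  imports "HOL-Library.Poly_Mapping"
begin

(* Polynomials in variables of type 'v with coefficients in 'k:
   finitely supported maps from exponent vectors ('v \<Rightarrow>\<^sub>0 nat) to 'k,
   with the convolution product of HOL-Library.Poly_Mapping. *)
type_synonym ('v, 'k) mpoly = "('v \<Rightarrow>\<^sub>0 nat) \<Rightarrow>\<^sub>0 'k"

definition polyring :: "'v set \<Rightarrow> ('v, 'k::comm_ring_1) mpoly set" where
  "polyring V = {p. \<forall>m\<in>Poly_Mapping.keys p. Poly_Mapping.keys m \<subseteq> V}"

definition mon :: "('v \<Rightarrow>\<^sub>0 nat) \<Rightarrow> ('v, 'k::comm_ring_1) mpoly" where
  "mon m = Poly_Mapping.single m 1"

definition var :: "'v \<Rightarrow> ('v, 'k::comm_ring_1) mpoly" where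
  "var v = mon (Poly_Mapping.single v 1)"

definition ideal_gen :: "'v set \<Rightarrow> ('v, 'k::comm_ring_1) mpoly set \<Rightarrow> ('v, 'k) mpoly set" where
  "ideal_gen V G = {p. \<exists>F c. finite F \<and> F \<subseteq> G \<and> (\<forall>g\<in>F. c g \<in> polyring V)
                          \<and> p = (\<Sum>g\<in>F. c g * g)}"

definition is_ideal :: "'v set \<Rightarrow> ('v, 'k::comm_ring_1) mpoly set \<Rightarrow> bool" where
  "is_ideal V I \<longleftrightarrow> I \<subseteq> polyring V \<and> ideal_gen V I = I"

definition monomial_ideal :: "'v set \<Rightarrow> ('v, 'k::comm_ring_1) mpoly set \<Rightarrow> bool" where
  "monomial_ideal V I \<longleftrightarrow> is_ideal V I \<and> I = ideal_gen V {mon m | m. mon m \<in> I}"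

definition colon :: "'v set \<Rightarrow> ('v, 'k::comm_ring_1) mpoly set \<Rightarrow> ('v, 'k) mpoly \<Rightarrow> ('v, 'k) mpoly set" where
  "colon V J f = {g \<in> polyring V. g * f \<in> J}"

definition mdvd :: "('v \<Rightarrow>\<^sub>0 nat) \<Rightarrow> ('v \<Rightarrow>\<^sub>0 nat) \<Rightarrow> bool" where
  "mdvd a b \<longleftrightarrow> (\<forall>v. Poly_Mapping.lookup a v \<le> Poly_Mapping.lookup b v)"

definition min_gens :: "'v set \<Rightarrow> ('v, 'k::comm_ring_1) mpoly set \<Rightarrow> ('v \<Rightarrow>\<^sub>0 nat) set" where
  "min_gens V I = {m. mon m \<in> I \<and> (\<forall>m'. mon m' \<in> I \<and> mdvd m' m \<longrightarrow> m' = m)}"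

definition lin_quot_wrt :: "'v set \<Rightarrow> ('v \<Rightarrow>\<^sub>0 nat) list \<Rightarrow> 'k::comm_ring_1 itself \<Rightarrow> bool" where
  "lin_quot_wrt V us (_ :: 'k itself) \<longleftrightarrow>
     (\<forall>j. 1 \<le> j \<and> j < length us \<longrightarrow>
        (\<exists>W \<subseteq> V. colon V (ideal_gen V ((mon :: _ \<Rightarrow> ('v,'k) mpoly) ` set (take j us))) (mon (us ! j))
                   = ideal_gen V (var ` W)))"

definition has_lin_quot :: "'v set \<Rightarrow> ('v, 'k::comm_ring_1) mpoly set \<Rightarrow> bool" where
  "has_lin_quot V I \<longleftrightarrow>
     (\<exists>us. distinct us \<and> set us = min_gens V I \<and> lin_quot_wrt V us TYPE('k))"

definition ideal_mult :: "'v set \<Rightarrow> ('v, 'k::comm_ring_1) mpoly set \<Rightarrow> ('v, 'k) mpoly set \<Rightarrow> ('v, 'k) mpoly set" where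
  "ideal_mult V A B = ideal_gen V {a * b | a b. a \<in> A \<and> b \<in> B}"

fun ideal_pow :: "'v set \<Rightarrow> ('v, 'k::comm_ring_1) mpoly set \<Rightarrow> nat \<Rightarrow> ('v, 'k) mpoly set" where
  "ideal_pow V A 0 = ideal_gen V {1}"
| "ideal_pow V A (Suc d) = ideal_mult V A (ideal_pow V A d)"

(* Variables of S^alpha: x_{ij} indexed by (i,j) with i < n, j < k i (0-based indices) *)
definition expvars :: "nat \<Rightarrow> (nat \<Rightarrow> nat) \<Rightarrow> (nat \<times> nat) set" where
  "expvars n k = {(i, j). i < n \<and> j < k i}"

definition Pideal :: "nat \<Rightarrow> (nat \<Rightarrow> nat) \<Rightarrow> nat \<Rightarrow> (nat \<times> nat, 'k::comm_ring_1) mpoly set" where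
  "Pideal n k i = ideal_gen (expvars n k) {var (i, j) | j. j < k i}"

(* expansion I^alpha = sum over a in G(I) of P_1^{a(1)} ... P_n^{a(n)},
   for I a monomial ideal of S = K[x_0,...,x_{n-1}] *)
definition expansion :: "nat \<Rightarrow> (nat \<Rightarrow> nat) \<Rightarrow> (nat, 'k::comm_ring_1) mpoly set
                          \<Rightarrow> (nat \<times> nat, 'k) mpoly set" where
  "expansion n k I =
     ideal_gen (expvars n k)
       (\<Union>a \<in> min_gens {..<n} I.
          foldr (\<lambda>i J. ideal_mult (expvars n k) (ideal_pow (expvars n k) (Pideal n k i) (Poly_Mapping.lookup a i)) J)
                [0..<n] (ideal_gen (expvars n k) {1}))"

end

theory Submission
  imports Defs "HOL-Library.Product_Lexorder" "HOL-Library.Set_Algebras"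
begin

text \<open>Both sides reduce to combinatorics of exponent vectors. For a monomial ideal minimally generated
  by \<open>x\<^sup>a\<^sup>1, \<dots>, x\<^sup>a\<^sup>r\<close>, the colon ideal \<open>(x\<^sup>a\<^sup>1, \<dots>, x\<^sup>a\<^sup>j\<^sup>-\<^sup>1) : x\<^sup>a\<^sup>j\<close> is generated by the monomials
  \<open>x\<^sup>a\<^sup>i\<^sup>-\<^sup>a\<^sup>j\<close> (truncated subtraction), so it is generated by variables iff every earlier \<open>a\<^sub>i\<close> admits an
  earlier \<open>a\<^sub>l\<close> with \<open>a\<^sub>l - a\<^sub>j = e\<^sub>w\<close> and \<open>a\<^sub>j(w) < a\<^sub>i(w)\<close>: linear quotients become a property of an
  ordering of \<open>G(I)\<close>. The minimal generators of \<open>I\<^sup>\<alpha>\<close> are the exponent vectors \<open>v\<close> in the variables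
  \<open>x\<^sub>i\<^sub>j\<close> whose block degrees \<open>\<Sum>\<^sub>j v\<^sub>i\<^sub>j\<close> form some \<open>a \<in> G(I)\<close>. An ordering of \<open>G(I)\<close> with linear
  quotients lifts to \<open>G(I\<^sup>\<alpha>)\<close> by ordering first along \<open>G(I)\<close> and then lexicographically. Conversely, the
  generators of \<open>I\<^sup>\<alpha>\<close> supported on the first variable of every block form a copy of \<open>G(I)\<close> closed under
  these exchange steps, so an ordering of \<open>G(I\<^sup>\<alpha>)\<close> with linear quotients restricts to one of \<open>G(I)\<close>.\<close>

lemma keys_add_nat: "Poly_Mapping.keys (a + b :: 'a \<Rightarrow>\<^sub>0 nat) = Poly_Mapping.keys a \<union> Poly_Mapping.keys b"
  by (auto simp: in_keys_iff lookup_add)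

lemma keys_diff_subset: "Poly_Mapping.keys (a - b :: 'a \<Rightarrow>\<^sub>0 nat) \<subseteq> Poly_Mapping.keys a"
  by (auto simp: in_keys_iff lookup_minus)

lemma diff_single_add:
  assumes "Poly_Mapping.lookup v x \<noteq> 0"
  shows "v - Poly_Mapping.single x 1 + Poly_Mapping.single x 1 = (v :: 'a \<Rightarrow>\<^sub>0 nat)"
  using assms by (intro poly_mapping_eqI) (auto simp: lookup_add lookup_minus lookup_single when_def)

lemma mdvd_refl [simp]: "mdvd a a"
  by (simp add: mdvd_def)

lemma mdvd_trans: "mdvd a b \<Longrightarrow> mdvd b c \<Longrightarrow> mdvd a c"
  unfolding mdvd_def using le_trans by blast

lemma mdvd_antisym: "mdvd a b \<Longrightarrow> mdvd b a \<Longrightarrow> a = b"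
  unfolding mdvd_def by (intro poly_mapping_eqI) (simp add: antisym)

lemma mdvd_add: "mdvd a b \<Longrightarrow> mdvd c d \<Longrightarrow> mdvd (a + c) (b + d)"
  unfolding mdvd_def by (simp add: lookup_add add_mono)

lemma mdvd_add_right: "mdvd a (a + b)"
  unfolding mdvd_def by (simp add: lookup_add)

lemma mdvd_keys: "mdvd a b \<Longrightarrow> Poly_Mapping.keys a \<subseteq> Poly_Mapping.keys b"
  unfolding mdvd_def by (metis in_keys_iff le_zero_eq subsetI)

lemma diff_add_mdvd: "mdvd a m \<Longrightarrow> m - a + a = m"
  unfolding mdvd_def by (intro poly_mapping_eqI) (simp add: lookup_add lookup_minus)

lemma diff_eq_0_iff_mdvd: "a - u = 0 \<longleftrightarrow> mdvd a (u :: 'v \<Rightarrow>\<^sub>0 nat)"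
  by (simp add: mdvd_def poly_mapping_eq_iff fun_eq_iff lookup_minus)

lemma mdvd_add_iff_diff: "mdvd a (m + u) \<longleftrightarrow> mdvd (a - u) m"
  unfolding mdvd_def by (simp add: lookup_add lookup_minus le_diff_conv)

lemma single_mdvd_iff: "mdvd (Poly_Mapping.single w 1) c \<longleftrightarrow> 0 < Poly_Mapping.lookup c w"
  unfolding mdvd_def by (auto simp: lookup_single when_def Suc_le_eq)

lemma mdvd_single_imp_eq:
  assumes "mdvd c (Poly_Mapping.single w 1)" "c \<noteq> 0"
  shows "c = Poly_Mapping.single w 1"
proof -
  have le: "Poly_Mapping.lookup c x \<le> (if x = w then 1 else 0)" for x
    using assms(1) unfolding mdvd_def by (auto simp: lookup_single when_def dest: spec[of _ x])
  have "Poly_Mapping.lookup c w = 1"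
  proof (rule ccontr)
    assume "Poly_Mapping.lookup c w \<noteq> 1"
    then have "Poly_Mapping.lookup c x = 0" for x
      using le[of x] le[of w] by (cases "x = w") auto
    then show False
      using assms(2) by (simp add: poly_mapping_eq_iff fun_eq_iff)
  qed
  with le show ?thesis
    by (intro poly_mapping_eqI) (metis le_zero_eq lookup_single_eq lookup_single_not_eq)
qed

definition total_deg :: "('v \<Rightarrow>\<^sub>0 nat) \<Rightarrow> nat" where
  "total_deg m = (\<Sum>x\<in>Poly_Mapping.keys m. Poly_Mapping.lookup m x)"

lemma total_deg_less:
  assumes "mdvd a b" "a \<noteq> b"
  shows "total_deg a < total_deg b"
proof -
  have le: "Poly_Mapping.lookup a y \<le> Poly_Mapping.lookup b y" for y
    using assms(1) by (simp add: mdvd_def)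
  obtain x where "Poly_Mapping.lookup a x \<noteq> Poly_Mapping.lookup b x"
    using assms(2) by (metis poly_mapping_eqI)
  with le have x: "Poly_Mapping.lookup a x < Poly_Mapping.lookup b x"
    by (simp add: order_less_le)
  have "total_deg a = (\<Sum>y\<in>Poly_Mapping.keys b. Poly_Mapping.lookup a y)"
    unfolding total_deg_def
    by (rule sum.mono_neutral_left[OF finite_keys mdvd_keys[OF assms(1)]]) (simp add: in_keys_iff)
  also have "\<dots> < total_deg b"
    unfolding total_deg_def
    by (rule sum_strict_mono_ex1[OF finite_keys]) (use le x in \<open>auto simp: in_keys_iff\<close>)
  finally show ?thesis .
qed

lemma polyring_add: "p \<in> polyring V \<Longrightarrow> q \<in> polyring V \<Longrightarrow> p + q \<in> polyring V"
  unfolding polyring_def using keys_add[of p q] by blast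

lemma polyring_mult: "p \<in> polyring V \<Longrightarrow> q \<in> polyring V \<Longrightarrow> p * q \<in> polyring V"
  unfolding polyring_def using keys_mult[of p q] by (fastforce simp: keys_add_nat)

lemma keys_mon [simp]: "Poly_Mapping.keys (mon m :: ('v, 'k::comm_ring_1) mpoly) = {m}"
  by (simp add: mon_def)

lemma mon_in_polyring: "Poly_Mapping.keys m \<subseteq> V \<Longrightarrow> mon m \<in> polyring V"
  by (simp add: polyring_def)

lemma zero_in_polyring [simp]: "0 \<in> polyring V"
  by (simp add: polyring_def)

lemma one_in_polyring [simp]: "1 \<in> polyring V"
  by (simp add: polyring_def)

lemma mon_mult: "mon a * mon b = mon (a + b)"
  by (simp add: mon_def mult_single)

definition ideal_closed :: "'v set \<Rightarrow> ('v, 'k::comm_ring_1) mpoly set \<Rightarrow> bool" where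
  "ideal_closed V J \<longleftrightarrow> 0 \<in> J \<and> (\<forall>p\<in>J. \<forall>q\<in>J. p + q \<in> J) \<and> (\<forall>c\<in>polyring V. \<forall>p\<in>J. c * p \<in> J)"

lemma ideal_closed_sum:
  assumes "ideal_closed V J" "finite F" "\<And>x. x \<in> F \<Longrightarrow> f x \<in> J"
  shows "sum f F \<in> J"
  using assms(2,3) by induction (use assms(1) in \<open>simp_all add: ideal_closed_def\<close>)

lemma ideal_gen_sumI:
  "finite F \<Longrightarrow> F \<subseteq> G \<Longrightarrow> \<forall>g\<in>F. c g \<in> polyring V \<Longrightarrow> (\<Sum>g\<in>F. c g * g) \<in> ideal_gen V G"
  unfolding ideal_gen_def by blast

lemma ideal_gen_least:
  assumes "G \<subseteq> J" "ideal_closed V J"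
  shows "ideal_gen V G \<subseteq> J"
proof
  fix p assume "p \<in> ideal_gen V G"
  then obtain F c where F: "finite F" "F \<subseteq> G" "\<forall>g\<in>F. c g \<in> polyring V" "p = (\<Sum>g\<in>F. c g * g)"
    unfolding ideal_gen_def by blast
  show "p \<in> J"
    unfolding F(4) using F(1-3) assms
    by (intro ideal_closed_sum[OF assms(2)]) (auto simp: ideal_closed_def)
qed

lemma ideal_gen_mono: "G \<subseteq> H \<Longrightarrow> ideal_gen V G \<subseteq> ideal_gen V H"
  unfolding ideal_gen_def by blast

lemma ideal_gen_base: "g \<in> G \<Longrightarrow> g \<in> ideal_gen V G"
  unfolding ideal_gen_def by (intro CollectI exI[of _ "{g}"] exI[of _ "\<lambda>_. 1"]) auto

lemma ideal_gen_add:
  assumes "p \<in> ideal_gen V G" "q \<in> ideal_gen V G"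
  shows "p + q \<in> ideal_gen V G"
proof -
  obtain F1 c1 where F1: "finite F1" "F1 \<subseteq> G" "\<forall>g\<in>F1. c1 g \<in> polyring V" "p = (\<Sum>g\<in>F1. c1 g * g)"
    using assms(1) unfolding ideal_gen_def by blast
  obtain F2 c2 where F2: "finite F2" "F2 \<subseteq> G" "\<forall>g\<in>F2. c2 g \<in> polyring V" "q = (\<Sum>g\<in>F2. c2 g * g)"
    using assms(2) unfolding ideal_gen_def by blast
  define d1 where "d1 g = (if g \<in> F1 then c1 g else 0)" for g
  define d2 where "d2 g = (if g \<in> F2 then c2 g else 0)" for g
  have "(\<Sum>g\<in>F1 \<union> F2. d1 g * g) = p"
    unfolding F1(4) d1_def by (rule sum.mono_neutral_cong_right) (use F1 F2 in auto)
  moreover have "(\<Sum>g\<in>F1 \<union> F2. d2 g * g) = q"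
    unfolding F2(4) d2_def by (rule sum.mono_neutral_cong_right) (use F1 F2 in auto)
  ultimately have "p + q = (\<Sum>g\<in>F1 \<union> F2. (d1 g + d2 g) * g)"
    by (simp add: distrib_right sum.distrib)
  moreover have "\<forall>g\<in>F1 \<union> F2. d1 g + d2 g \<in> polyring V"
    using F1(3) F2(3) by (simp add: d1_def d2_def polyring_add)
  ultimately show ?thesis
    using F1(1,2) F2(1,2) by (simp add: ideal_gen_sumI)
qed

lemma ideal_gen_mult:
  assumes "c \<in> polyring V" "p \<in> ideal_gen V G"
  shows "c * p \<in> ideal_gen V G"
proof -
  obtain F d where F: "finite F" "F \<subseteq> G" "\<forall>g\<in>F. d g \<in> polyring V" "p = (\<Sum>g\<in>F. d g * g)"
    using assms(2) unfolding ideal_gen_def by blast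
  have "c * p = (\<Sum>g\<in>F. (c * d g) * g)"
    unfolding F(4) by (simp add: sum_distrib_left mult.assoc)
  moreover have "\<forall>g\<in>F. c * d g \<in> polyring V"
    using F(3) assms(1) by (simp add: polyring_mult)
  ultimately show ?thesis
    using F(1,2) by (simp add: ideal_gen_sumI)
qed

lemma ideal_closed_ideal_gen: "ideal_closed V (ideal_gen V G)"
  unfolding ideal_closed_def using ideal_gen_sumI[of "{}" G]
  by (simp add: ideal_gen_add ideal_gen_mult)

section \<open>Monomial ideals as sets of exponent vectors\<close>

definition monideal :: "'v set \<Rightarrow> ('v \<Rightarrow>\<^sub>0 nat) set \<Rightarrow> ('v, 'k::comm_ring_1) mpoly set" where
  "monideal V A = ideal_gen V (mon ` A)"

definition exps_in :: "'v set \<Rightarrow> ('v \<Rightarrow>\<^sub>0 nat) set \<Rightarrow> bool" where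
  "exps_in V A \<longleftrightarrow> (\<forall>a\<in>A. Poly_Mapping.keys a \<subseteq> V)"

definition supported_on_multiples :: "'v set \<Rightarrow> ('v \<Rightarrow>\<^sub>0 nat) set \<Rightarrow> ('v, 'k::comm_ring_1) mpoly set" where
  "supported_on_multiples V A = {p \<in> polyring V. \<forall>m\<in>Poly_Mapping.keys p. \<exists>a\<in>A. mdvd a m}"

lemma ideal_closed_supported_on_multiples:
  "ideal_closed V (supported_on_multiples V A :: ('v, 'k::comm_ring_1) mpoly set)"
proof -
  have "p + q \<in> supported_on_multiples V A"
    if "p \<in> supported_on_multiples V A" "q \<in> supported_on_multiples V A" for p q :: "('v, 'k) mpoly"
    using that keys_add[of p q] polyring_add[of p V q] unfolding supported_on_multiples_def by blast
  moreover have "c * p \<in> supported_on_multiples V A"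
    if c: "c \<in> polyring V" and p: "p \<in> supported_on_multiples V A" for c p :: "('v, 'k) mpoly"
  proof -
    have "\<exists>a\<in>A. mdvd a m" if m: "m \<in> Poly_Mapping.keys (c * p)" for m
    proof -
      obtain x y where "m = x + y" "y \<in> Poly_Mapping.keys p"
        using m keys_mult[of c p] by blast
      moreover from this obtain a where "a \<in> A" "mdvd a y"
        using p unfolding supported_on_multiples_def by blast
      ultimately show ?thesis
        using mdvd_trans[OF _ mdvd_add_right[of y x]] by (metis add.commute)
    qed
    with c p show ?thesis
      by (simp add: supported_on_multiples_def polyring_mult)
  qed
  moreover have "0 \<in> (supported_on_multiples V A :: ('v, 'k) mpoly set)"
    by (simp add: supported_on_multiples_def)
  ultimately show ?thesis
    unfolding ideal_closed_def by blast
qed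

lemma sum_single_lookup: "(\<Sum>m\<in>Poly_Mapping.keys p. Poly_Mapping.single m (Poly_Mapping.lookup p m)) = p"
  by (rule poly_mapping_eqI)
    (simp add: lookup_sum lookup_single when_def sum.delta' in_keys_iff)

lemma single_in_monideal:
  assumes "Poly_Mapping.keys m \<subseteq> V" "a \<in> A" "mdvd a m"
  shows "Poly_Mapping.single m c \<in> monideal V A"
proof -
  have "Poly_Mapping.single m c = Poly_Mapping.single (m - a) c * mon a"
    by (simp add: mon_def mult_single diff_add_mdvd[OF assms(3)])
  moreover have "Poly_Mapping.single (m - a) c \<in> polyring V"
    using assms(1) keys_diff_subset[of m a] by (auto simp: polyring_def)
  ultimately show ?thesis
    unfolding monideal_def using assms(2) by (metis ideal_gen_base ideal_gen_mult imageI)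
qed

lemma monideal_eq_supported:
  assumes "exps_in V A"
  shows "monideal V A = (supported_on_multiples V A :: ('v, 'k::comm_ring_1) mpoly set)"
proof
  have "mon ` A \<subseteq> (supported_on_multiples V A :: ('v, 'k) mpoly set)"
    using assms by (fastforce simp: supported_on_multiples_def exps_in_def mon_in_polyring intro: mdvd_refl)
  then show "monideal V A \<subseteq> (supported_on_multiples V A :: ('v, 'k) mpoly set)"
    unfolding monideal_def by (rule ideal_gen_least[OF _ ideal_closed_supported_on_multiples])
next
  show "supported_on_multiples V A \<subseteq> (monideal V A :: ('v, 'k) mpoly set)"
  proof
    fix p :: "('v, 'k) mpoly"
    assume p: "p \<in> supported_on_multiples V A"
    have "Poly_Mapping.single m (Poly_Mapping.lookup p m) \<in> monideal V A"
      if "m \<in> Poly_Mapping.keys p" for m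
      using p that single_in_monideal by (fastforce simp: supported_on_multiples_def polyring_def)
    then have "(\<Sum>m\<in>Poly_Mapping.keys p. Poly_Mapping.single m (Poly_Mapping.lookup p m)) \<in> monideal V A"
      unfolding monideal_def by (intro ideal_closed_sum[OF ideal_closed_ideal_gen]) auto
    then show "p \<in> monideal V A"
      by (simp add: sum_single_lookup)
  qed
qed

lemma mon_in_monideal: "a \<in> A \<Longrightarrow> mon a \<in> monideal V A"
  by (simp add: monideal_def ideal_gen_base)

lemma mon_in_monideal_iff:
  assumes "exps_in V A"
  shows "mon m \<in> (monideal V A :: ('v, 'k::comm_ring_1) mpoly set)
           \<longleftrightarrow> Poly_Mapping.keys m \<subseteq> V \<and> (\<exists>a\<in>A. mdvd a m)"
  by (simp add: monideal_eq_supported[OF assms] supported_on_multiples_def polyring_def)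

lemma monideal_subset_iff:
  assumes "exps_in V A" "exps_in V B"
  shows "(monideal V A :: ('v, 'k::comm_ring_1) mpoly set) \<subseteq> monideal V B
           \<longleftrightarrow> (\<forall>a\<in>A. \<exists>b\<in>B. mdvd b a)"
proof
  assume sub: "(monideal V A :: ('v, 'k) mpoly set) \<subseteq> monideal V B"
  show "\<forall>a\<in>A. \<exists>b\<in>B. mdvd b a"
  proof
    fix a assume "a \<in> A"
    then have "mon a \<in> (monideal V A :: ('v, 'k) mpoly set)"
      by (rule mon_in_monideal)
    then show "\<exists>b\<in>B. mdvd b a"
      using sub mon_in_monideal_iff[OF assms(2)] by blast
  qed
next
  assume "\<forall>a\<in>A. \<exists>b\<in>B. mdvd b a"
  then have "\<exists>b\<in>B. mdvd b m" if "\<exists>a\<in>A. mdvd a m" for m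
    using that mdvd_trans by meson
  then show "(monideal V A :: ('v, 'k) mpoly set) \<subseteq> monideal V B"
    unfolding monideal_eq_supported[OF assms(1)] monideal_eq_supported[OF assms(2)]
      supported_on_multiples_def by blast
qed

lemma monideal_eq_iff:
  assumes "exps_in V A" "exps_in V B"
  shows "(monideal V A :: ('v, 'k::comm_ring_1) mpoly set) = monideal V B
           \<longleftrightarrow> (\<forall>a\<in>A. \<exists>b\<in>B. mdvd b a) \<and> (\<forall>b\<in>B. \<exists>a\<in>A. mdvd a b)"
  using monideal_subset_iff[OF assms, where 'k='k] monideal_subset_iff[OF assms(2,1), where 'k='k]
  by blast

definition mdvd_antichain :: "('v \<Rightarrow>\<^sub>0 nat) set \<Rightarrow> bool" where
  "mdvd_antichain X \<longleftrightarrow> (\<forall>a\<in>X. \<forall>b\<in>X. mdvd a b \<longrightarrow> a = b)"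

lemma min_gens_monideal:
  assumes "exps_in V A" "mdvd_antichain A"
  shows "min_gens V (monideal V A :: ('v, 'k::comm_ring_1) mpoly set) = A"
proof (rule set_eqI)
  fix m
  have keys: "Poly_Mapping.keys a \<subseteq> V" if "a \<in> A" for a
    using assms(1) that by (simp add: exps_in_def)
  show "m \<in> min_gens V (monideal V A :: ('v, 'k) mpoly set) \<longleftrightarrow> m \<in> A"
    unfolding min_gens_def mem_Collect_eq mon_in_monideal_iff[OF assms(1)]
  proof safe
    fix a assume "a \<in> A" "mdvd a m"
      and min: "\<forall>m'. (Poly_Mapping.keys m' \<subseteq> V \<and> (\<exists>a\<in>A. mdvd a m')) \<and> mdvd m' m \<longrightarrow> m' = m"
    then have "a = m"
      using keys[of a] mdvd_refl[of a] by blast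
    with \<open>a \<in> A\<close> show "m \<in> A"
      by simp
  next
    fix m' a assume "m \<in> A" "a \<in> A" "mdvd a m'" "mdvd m' m"
    then have "a = m"
      using assms(2) mdvd_trans[of a m' m] unfolding mdvd_antichain_def by blast
    with \<open>mdvd a m'\<close> \<open>mdvd m' m\<close> show "m' = m"
      by (simp add: mdvd_antisym)
  qed (use keys mdvd_refl in blast)+
qed

lemma min_gens_below:
  "mon m \<in> I \<Longrightarrow> \<exists>g\<in>min_gens V (I :: ('v, 'k::comm_ring_1) mpoly set). mdvd g m"
proof (induction "total_deg m" arbitrary: m rule: less_induct)
  case less
  show ?case
  proof (cases "m \<in> min_gens V I")
    case False
    then obtain m' where "mon m' \<in> I" "mdvd m' m" "m' \<noteq> m"
      using less.prems unfolding min_gens_def by blast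
    then show ?thesis
      using less.hyps total_deg_less mdvd_trans by metis
  qed (use mdvd_refl in blast)
qed

lemma mdvd_antichain_min_gens: "mdvd_antichain (min_gens V I)"
  unfolding mdvd_antichain_def min_gens_def by blast

lemma monomial_ideal_eq_monideal_min_gens:
  assumes "monomial_ideal V (I :: ('v, 'k::comm_ring_1) mpoly set)"
  shows "exps_in V (min_gens V I)" "I = monideal V (min_gens V I)"
proof -
  let ?E = "{m. mon m \<in> I}"
  have "I \<subseteq> polyring V"
    using assms unfolding monomial_ideal_def is_ideal_def by blast
  then have E: "exps_in V ?E"
    unfolding exps_in_def polyring_def by (metis (mono_tags, lifting) keys_mon mem_Collect_eq singletonI subsetD)
  moreover have "min_gens V I \<subseteq> ?E"
    unfolding min_gens_def by blast
  ultimately show G: "exps_in V (min_gens V I)"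
    by (auto simp: exps_in_def)
  have "I = monideal V ?E"
    using assms unfolding monomial_ideal_def monideal_def by (simp add: setcompr_eq_image)
  also have "\<dots> = monideal V (min_gens V I)"
    unfolding monideal_eq_iff[OF E G] using min_gens_below unfolding min_gens_def by blast
  finally show "I = monideal V (min_gens V I)" .
qed

lemma exps_in_plus: "exps_in V A \<Longrightarrow> exps_in V B \<Longrightarrow> exps_in V (A + B)"
  unfolding exps_in_def set_plus_def by (fastforce simp: keys_add_nat)

lemma monideal_mult:
  assumes "exps_in V A" "exps_in V B"
  shows "ideal_mult V (monideal V A) (monideal V B) = (monideal V (A + B) :: ('v, 'k::comm_ring_1) mpoly set)"
proof
  have AB: "exps_in V (A + B)"
    by (rule exps_in_plus[OF assms])
  have prod: "p * q \<in> (monideal V (A + B) :: ('v, 'k) mpoly set)"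
    if "p \<in> monideal V A" "q \<in> monideal V B" for p q :: "('v, 'k) mpoly"
  proof -
    have p: "p \<in> supported_on_multiples V A" and q: "q \<in> supported_on_multiples V B"
      using that monideal_eq_supported[OF assms(1)] monideal_eq_supported[OF assms(2)] by auto
    have "\<exists>c\<in>A + B. mdvd c m" if m: "m \<in> Poly_Mapping.keys (p * q)" for m
    proof -
      obtain x y where xy: "m = x + y" "x \<in> Poly_Mapping.keys p" "y \<in> Poly_Mapping.keys q"
        using m keys_mult[of p q] by blast
      obtain a b where "a \<in> A" "mdvd a x" "b \<in> B" "mdvd b y"
        using p q xy(2,3) unfolding supported_on_multiples_def by blast
      then show ?thesis
        using xy(1) mdvd_add by blast
    qed
    with p q show ?thesis
      unfolding monideal_eq_supported[OF AB] by (simp add: supported_on_multiples_def polyring_mult)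
  qed
  show "ideal_mult V (monideal V A) (monideal V B) \<subseteq> (monideal V (A + B) :: ('v, 'k) mpoly set)"
    unfolding ideal_mult_def monideal_def[of V "A + B"]
    by (rule ideal_gen_least[OF _ ideal_closed_ideal_gen]) (use prod in \<open>auto simp: monideal_def\<close>)
next
  have "mon ` (A + B) \<subseteq> {p * q | p q. p \<in> (monideal V A :: ('v, 'k) mpoly set) \<and> q \<in> monideal V B}"
    unfolding set_plus_def monideal_def by (auto simp: mon_mult[symmetric] intro!: exI ideal_gen_base)
  then show "(monideal V (A + B) :: ('v, 'k) mpoly set) \<subseteq> ideal_mult V (monideal V A) (monideal V B)"
    unfolding monideal_def[of V "A + B"] ideal_mult_def by (rule ideal_gen_mono)
qed

fun sumset_pow :: "('v \<Rightarrow>\<^sub>0 nat) set \<Rightarrow> nat \<Rightarrow> ('v \<Rightarrow>\<^sub>0 nat) set" where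
  "sumset_pow B 0 = {0}"
| "sumset_pow B (Suc d) = B + sumset_pow B d"

lemma exps_in_sumset_pow: "exps_in V B \<Longrightarrow> exps_in V (sumset_pow B d)"
  by (induction d) (simp add: exps_in_def, simp add: exps_in_plus)

lemma ideal_pow_monideal:
  assumes "exps_in V B"
  shows "ideal_pow V (monideal V B) d = (monideal V (sumset_pow B d) :: ('v, 'k::comm_ring_1) mpoly set)"
proof (induction d)
  case 0
  show ?case
    by (simp add: monideal_def mon_def)
next
  case (Suc d)
  then show ?case
    by (simp add: monideal_mult[OF assms exps_in_sumset_pow[OF assms]])
qed

lemma ideal_gen_UN_monideal:
  "ideal_gen V (\<Union>a\<in>G. monideal V (A a)) = (monideal V (\<Union>a\<in>G. A a) :: ('v, 'k::comm_ring_1) mpoly set)"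
proof
  have "monideal V (A a) \<subseteq> (monideal V (\<Union>a\<in>G. A a) :: ('v, 'k) mpoly set)" if "a \<in> G" for a
    unfolding monideal_def using that by (intro ideal_gen_mono) blast
  then show "ideal_gen V (\<Union>a\<in>G. monideal V (A a)) \<subseteq> (monideal V (\<Union>a\<in>G. A a) :: ('v, 'k) mpoly set)"
    unfolding monideal_def[of V "\<Union>a\<in>G. A a"] by (intro ideal_gen_least[OF _ ideal_closed_ideal_gen]) auto
  show "(monideal V (\<Union>a\<in>G. A a) :: ('v, 'k) mpoly set) \<subseteq> ideal_gen V (\<Union>a\<in>G. monideal V (A a))"
    unfolding monideal_def[of V "\<Union>a\<in>G. A a"] by (intro ideal_gen_mono) (auto simp: monideal_def intro: ideal_gen_base)
qed

section \<open>Colon ideals and linear quotients\<close>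

lemma lookup_mult_mon:
  "Poly_Mapping.lookup (g * mon u :: ('v, 'k::comm_ring_1) mpoly) (m + u) = Poly_Mapping.lookup g m"
proof -
  have "g * mon u = (\<Sum>x\<in>Poly_Mapping.keys g. Poly_Mapping.single (x + u) (Poly_Mapping.lookup g x))"
    by (subst sum_single_lookup[symmetric, of g]) (simp add: mon_def sum_distrib_right mult_single)
  then show ?thesis
    by (simp add: lookup_sum lookup_single when_def sum.delta in_keys_iff)
qed

lemma keys_mult_mon:
  "Poly_Mapping.keys (g * mon u :: ('v, 'k::comm_ring_1) mpoly) = (\<lambda>m. m + u) ` Poly_Mapping.keys g"
proof
  show "Poly_Mapping.keys (g * mon u) \<subseteq> (\<lambda>m. m + u) ` Poly_Mapping.keys g"
    using keys_mult[of g "mon u"] by auto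
  show "(\<lambda>m. m + u) ` Poly_Mapping.keys g \<subseteq> Poly_Mapping.keys (g * mon u)"
    using lookup_mult_mon[of g u] by (auto simp: in_keys_iff)
qed

lemma exps_in_diff_image: "exps_in V A \<Longrightarrow> exps_in V ((\<lambda>a. a - u) ` A)"
  using keys_diff_subset by (fastforce simp: exps_in_def)

lemma colon_monideal:
  assumes "exps_in V A" "Poly_Mapping.keys u \<subseteq> V"
  shows "colon V (monideal V A) (mon u :: ('v, 'k::comm_ring_1) mpoly) = monideal V ((\<lambda>a. a - u) ` A)"
proof -
  have "g * mon u \<in> supported_on_multiples V A \<longleftrightarrow> g \<in> supported_on_multiples V ((\<lambda>a. a - u) ` A)"
    if g: "g \<in> polyring V" for g :: "('v, 'k) mpoly"
  proof -
    have "g * mon u \<in> polyring V"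
      using g assms(2) by (simp add: polyring_mult mon_in_polyring)
    then show ?thesis
      using g by (simp add: supported_on_multiples_def keys_mult_mon mdvd_add_iff_diff)
  qed
  then show ?thesis
    unfolding colon_def monideal_eq_supported[OF assms(1)]
      monideal_eq_supported[OF exps_in_diff_image[OF assms(1)]]
    by (auto simp: supported_on_multiples_def)
qed

lemma var_ideal_eq_monideal: "ideal_gen V (var ` W) = monideal V ((\<lambda>w. Poly_Mapping.single w 1) ` W)"
  by (simp add: monideal_def var_def image_image)

lemma monideal_eq_var_ideal_iff:
  assumes "exps_in V B" "0 \<notin> B"
  shows "(\<exists>W\<subseteq>V. (monideal V B :: ('v, 'k::comm_ring_1) mpoly set) = ideal_gen V (var ` W))
         \<longleftrightarrow> (\<forall>b\<in>B. \<exists>w. Poly_Mapping.single w 1 \<in> B \<and> mdvd (Poly_Mapping.single w 1) b)"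
proof
  assume "\<exists>W\<subseteq>V. (monideal V B :: ('v, 'k) mpoly set) = ideal_gen V (var ` W)"
  then obtain W where W: "W \<subseteq> V" "(monideal V B :: ('v, 'k) mpoly set) = ideal_gen V (var ` W)"
    by blast
  have units: "exps_in V ((\<lambda>w. Poly_Mapping.single w 1) ` W)"
    using W(1) by (auto simp: exps_in_def)
  have below_unit: "\<forall>b\<in>B. \<exists>w\<in>W. mdvd (Poly_Mapping.single w 1) b"
    and unit_below: "\<forall>w\<in>W. \<exists>b\<in>B. mdvd b (Poly_Mapping.single w 1)"
    using W(2) unfolding var_ideal_eq_monideal monideal_eq_iff[OF assms(1) units] by auto
  show "\<forall>b\<in>B. \<exists>w. Poly_Mapping.single w 1 \<in> B \<and> mdvd (Poly_Mapping.single w 1) b"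
  proof
    fix b assume "b \<in> B"
    then obtain w where w: "w \<in> W" "mdvd (Poly_Mapping.single w 1) b"
      using below_unit by blast
    then obtain b' where "b' \<in> B" "mdvd b' (Poly_Mapping.single w 1)"
      using unit_below by blast
    then have "Poly_Mapping.single w 1 \<in> B"
      using assms(2) mdvd_single_imp_eq by fastforce
    with w show "\<exists>w. Poly_Mapping.single w 1 \<in> B \<and> mdvd (Poly_Mapping.single w 1) b"
      by blast
  qed
next
  assume h: "\<forall>b\<in>B. \<exists>w. Poly_Mapping.single w 1 \<in> B \<and> mdvd (Poly_Mapping.single w 1) b"
  define W where "W = {w. Poly_Mapping.single w (1::nat) \<in> B}"
  have "W \<subseteq> V"
    using assms(1) by (auto simp: W_def exps_in_def)
  then have units: "exps_in V ((\<lambda>w. Poly_Mapping.single w 1) ` W)"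
    by (auto simp: exps_in_def)
  have "(monideal V B :: ('v, 'k) mpoly set) = ideal_gen V (var ` W)"
    unfolding var_ideal_eq_monideal monideal_eq_iff[OF assms(1) units]
    using h by (auto simp: W_def intro: mdvd_refl)
  with \<open>W \<subseteq> V\<close> show "\<exists>W\<subseteq>V. (monideal V B :: ('v, 'k) mpoly set) = ideal_gen V (var ` W)"
    by blast
qed

definition lin_quot_step :: "('v \<Rightarrow>\<^sub>0 nat) set \<Rightarrow> ('v \<Rightarrow>\<^sub>0 nat) \<Rightarrow> bool" where
  "lin_quot_step A u \<longleftrightarrow> (\<forall>a\<in>A. \<exists>a'\<in>A. \<exists>w. a' - u = Poly_Mapping.single w 1
                              \<and> Poly_Mapping.lookup u w < Poly_Mapping.lookup a w)"

lemma colon_var_ideal_iff_lin_quot_step: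
  assumes "exps_in V A" "Poly_Mapping.keys u \<subseteq> V" "\<forall>a\<in>A. \<not> mdvd a u"
  shows "(\<exists>W\<subseteq>V. colon V (monideal V A) (mon u :: ('v, 'k::comm_ring_1) mpoly) = ideal_gen V (var ` W))
           \<longleftrightarrow> lin_quot_step A u"
proof -
  have "0 \<notin> (\<lambda>a. a - u) ` A"
    using assms(3) by (auto simp: diff_eq_0_iff_mdvd)
  then have "(\<exists>W\<subseteq>V. colon V (monideal V A) (mon u :: ('v, 'k) mpoly) = ideal_gen V (var ` W))
      \<longleftrightarrow> (\<forall>b\<in>(\<lambda>a. a - u) ` A. \<exists>w. Poly_Mapping.single w 1 \<in> (\<lambda>a. a - u) ` A
                                      \<and> mdvd (Poly_Mapping.single w 1) b)"
    unfolding colon_monideal[OF assms(1,2)]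
    by (rule monideal_eq_var_ideal_iff[OF exps_in_diff_image[OF assms(1)]])
  also have "\<dots> \<longleftrightarrow> lin_quot_step A u"
    unfolding lin_quot_step_def single_mdvd_iff by (force simp: lookup_minus)
  finally show ?thesis .
qed

definition lin_quot_list :: "('v \<Rightarrow>\<^sub>0 nat) list \<Rightarrow> bool" where
  "lin_quot_list us \<longleftrightarrow> (\<forall>j<length us. lin_quot_step (set (take j us)) (us ! j))"

lemma colon_prefix_var_ideal_iff:
  fixes us :: "('v \<Rightarrow>\<^sub>0 nat) list"
  assumes "exps_in V (set us)" "distinct us" "mdvd_antichain (set us)" "j < length us"
  shows "(\<exists>W\<subseteq>V. colon V (ideal_gen V ((mon :: _ \<Rightarrow> ('v, 'k::comm_ring_1) mpoly) ` set (take j us)))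
                     (mon (us ! j)) = ideal_gen V (var ` W))
           \<longleftrightarrow> lin_quot_step (set (take j us)) (us ! j)"
proof -
  have "exps_in V (set (take j us))"
    using assms(1) set_take_subset[of j us] by (auto simp: exps_in_def)
  moreover have "Poly_Mapping.keys (us ! j) \<subseteq> V"
    using assms(1,4) by (simp add: exps_in_def)
  moreover have "\<forall>a\<in>set (take j us). \<not> mdvd a (us ! j)"
  proof
    fix a assume "a \<in> set (take j us)"
    then obtain i where "i < j" "a = us ! i"
      using assms(4) by (auto simp: in_set_conv_nth)
    with assms(2-4) show "\<not> mdvd a (us ! j)"
      unfolding mdvd_antichain_def by (metis nth_eq_iff_index_eq nth_mem order.strict_trans less_irrefl)
  qed
  ultimately show ?thesis
    using colon_var_ideal_iff_lin_quot_step[where 'k='k] unfolding monideal_def by blast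
qed

lemma lin_quot_wrt_iff_lin_quot_list:
  fixes us :: "('v \<Rightarrow>\<^sub>0 nat) list"
  assumes "exps_in V (set us)" "distinct us" "mdvd_antichain (set us)"
  shows "lin_quot_wrt V us TYPE('k::comm_ring_1) \<longleftrightarrow> lin_quot_list us"
proof -
  have "lin_quot_step (set (take 0 us)) (us ! 0)"
    by (simp add: lin_quot_step_def)
  then have "lin_quot_list us \<longleftrightarrow> (\<forall>j. 1 \<le> j \<and> j < length us \<longrightarrow> lin_quot_step (set (take j us)) (us ! j))"
    unfolding lin_quot_list_def by (metis less_one not_less)
  then show ?thesis
    unfolding lin_quot_wrt_def using colon_prefix_var_ideal_iff[OF assms, where 'k='k] by auto
qed

lemma has_lin_quot_monideal_iff:
  assumes "exps_in V X" "mdvd_antichain X"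
  shows "has_lin_quot V (monideal V X :: ('v, 'k::comm_ring_1) mpoly set)
           \<longleftrightarrow> (\<exists>us. distinct us \<and> set us = X \<and> lin_quot_list us)"
  unfolding has_lin_quot_def min_gens_monideal[OF assms]
  using lin_quot_wrt_iff_lin_quot_list[where 'k='k] assms by metis

definition lin_quot_order :: "(('v \<Rightarrow>\<^sub>0 nat) \<Rightarrow> ('v \<Rightarrow>\<^sub>0 nat) \<Rightarrow> bool) \<Rightarrow> ('v \<Rightarrow>\<^sub>0 nat) set \<Rightarrow> bool" where
  "lin_quot_order prec X \<longleftrightarrow> (\<forall>y\<in>X. lin_quot_step {t \<in> X. prec t y} y)"

lemma set_take_sorted_key:
  fixes key :: "'a \<Rightarrow> 'b::linorder"
  assumes "sorted_wrt (\<lambda>x y. key x < key y) us" "j < length us"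
  shows "set (take j us) = {t \<in> set us. key t < key (us ! j)}"
proof -
  have nth_less: "key (us ! i) < key (us ! i')" if "i < i'" "i' < length us" for i i'
    using assms(1) that by (simp add: sorted_wrt_iff_nth_less)
  have less: "key (us ! i) < key (us ! j) \<longleftrightarrow> i < j" if "i < length us" for i
    using that assms(2) nth_less[of i j] nth_less[of j i] by (cases i j rule: linorder_cases) auto
  show ?thesis
    using assms(2) by (auto simp: in_set_conv_nth less; metis dual_order.strict_trans nth_take)
qed

lemma lin_quot_list_iff_order:
  fixes key :: "('v \<Rightarrow>\<^sub>0 nat) \<Rightarrow> 'b::linorder"
  assumes "sorted_wrt (\<lambda>x y. key x < key y) us"
  shows "lin_quot_list us \<longleftrightarrow> lin_quot_order (\<lambda>x y. key x < key y) (set us)"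
  unfolding lin_quot_list_def lin_quot_order_def
  by (simp add: set_take_sorted_key[OF assms] all_set_conv_all_nth)

lemma lin_quot_order_imp_list:
  fixes key :: "('v \<Rightarrow>\<^sub>0 nat) \<Rightarrow> 'b::linorder"
  assumes "finite X" "inj_on key X" "lin_quot_order (\<lambda>x y. key x < key y) X"
  shows "\<exists>us. distinct us \<and> set us = X \<and> lin_quot_list us"
proof -
  interpret folding_insort_key "(\<le>) :: 'b \<Rightarrow> 'b \<Rightarrow> bool" "(<)" X key
    by unfold_locales (rule assms(2))
  obtain us where us: "sorted_wrt (<) (map key us)" "set us = X" "length us = card X"
    using finite_set_strict_sorted[OF subset_refl assms(1)] by blast
  then have "distinct us"
    by (simp add: card_distinct)
  with us assms(3) show ?thesis
    using lin_quot_list_iff_order[of key us] by (auto simp: sorted_wrt_map)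
qed

definition list_pos :: "'a list \<Rightarrow> 'a \<Rightarrow> nat" where
  "list_pos us x = (THE i. i < length us \<and> us ! i = x)"

lemma list_pos_nth: "distinct us \<Longrightarrow> i < length us \<Longrightarrow> list_pos us (us ! i) = i"
  unfolding list_pos_def by (rule the_equality) (auto simp: nth_eq_iff_index_eq)

lemma inj_on_list_pos: "distinct us \<Longrightarrow> inj_on (list_pos us) (set us)"
  by (auto simp: inj_on_def in_set_conv_nth list_pos_nth)

lemma lin_quot_list_imp_order:
  assumes "distinct us" "lin_quot_list us"
  shows "lin_quot_order (\<lambda>x y. list_pos us x < list_pos us y) (set us)"
proof -
  have "sorted_wrt (\<lambda>x y. list_pos us x < list_pos us y) us"
    using assms(1) by (simp add: sorted_wrt_iff_nth_less list_pos_nth)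
  with assms(2) show ?thesis
    using lin_quot_list_iff_order by blast
qed

section \<open>The minimal generators of the expansion\<close>

definition block_deg :: "(nat \<Rightarrow> nat) \<Rightarrow> (nat \<times> nat \<Rightarrow>\<^sub>0 nat) \<Rightarrow> nat \<Rightarrow> nat" where
  "block_deg k v i = (\<Sum>j<k i. Poly_Mapping.lookup v (i, j))"

definition block_exps :: "(nat \<Rightarrow> nat) \<Rightarrow> nat set \<Rightarrow> (nat \<Rightarrow> nat) \<Rightarrow> (nat \<times> nat \<Rightarrow>\<^sub>0 nat) set" where
  "block_exps k S c =
     {v. Poly_Mapping.keys v \<subseteq> Sigma S (\<lambda>i. {..<k i}) \<and> (\<forall>i\<in>S. block_deg k v i = c i)}"

definition block_units :: "(nat \<Rightarrow> nat) \<Rightarrow> nat \<Rightarrow> (nat \<times> nat \<Rightarrow>\<^sub>0 nat) set" where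
  "block_units k i = (\<lambda>j. Poly_Mapping.single (i, j) 1) ` {..<k i}"

abbreviation expansion_gens :: "nat \<Rightarrow> (nat \<Rightarrow> nat) \<Rightarrow> (nat \<Rightarrow>\<^sub>0 nat) \<Rightarrow> (nat \<times> nat \<Rightarrow>\<^sub>0 nat) set" where
  "expansion_gens n k a \<equiv> block_exps k {..<n} (Poly_Mapping.lookup a)"

definition restrict_exps :: "('a \<Rightarrow>\<^sub>0 nat) \<Rightarrow> 'a set \<Rightarrow> 'a \<Rightarrow>\<^sub>0 nat" where
  "restrict_exps v C = Abs_poly_mapping (\<lambda>x. if x \<in> C then Poly_Mapping.lookup v x else 0)"

lemma lookup_restrict_exps:
  "Poly_Mapping.lookup (restrict_exps v C) x = (if x \<in> C then Poly_Mapping.lookup v x else 0)"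
proof -
  have "{x. (if x \<in> C then Poly_Mapping.lookup v x else 0) \<noteq> 0} \<subseteq> Poly_Mapping.keys v"
    by (auto simp: in_keys_iff)
  then show ?thesis
    unfolding restrict_exps_def by (simp add: finite_subset)
qed

lemma lookup_eq_0_outside: "Poly_Mapping.keys v \<subseteq> C \<Longrightarrow> x \<notin> C \<Longrightarrow> Poly_Mapping.lookup v x = 0"
  by (auto simp: in_keys_iff)

lemma block_deg_add: "block_deg k (a + b) i = block_deg k a i + block_deg k b i"
  by (simp add: block_deg_def lookup_add sum.distrib)

lemma block_deg_single:
  "block_deg k (Poly_Mapping.single (i', j) c) i = (if i' = i \<and> j < k i then c else 0)"
  by (auto simp: block_deg_def lookup_single when_def sum.delta)

lemma block_deg_outside:
  "Poly_Mapping.keys v \<subseteq> Sigma S (\<lambda>i. {..<k i}) \<Longrightarrow> i \<notin> S \<Longrightarrow> block_deg k v i = 0"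
  unfolding block_deg_def by (auto intro!: sum.neutral lookup_eq_0_outside)

lemma block_deg_mono: "mdvd u v \<Longrightarrow> block_deg k u i \<le> block_deg k v i"
  unfolding block_deg_def mdvd_def by (intro sum_mono) blast

lemma block_deg_pos_imp_lookup:
  assumes "block_deg k v i \<noteq> 0"
  obtains j where "j < k i" "Poly_Mapping.lookup v (i, j) \<noteq> 0"
  using assms unfolding block_deg_def by (meson lessThan_iff sum.neutral)

lemma sum_le_eq_imp_eq:
  fixes f g :: "'a \<Rightarrow> nat"
  assumes "finite S" "\<And>x. x \<in> S \<Longrightarrow> f x \<le> g x" "sum f S = sum g S" "x \<in> S"
  shows "f x = g x"
proof (rule ccontr)
  assume "f x \<noteq> g x"
  with assms(2,4) have "sum f S < sum g S"
    using assms(1) by (intro sum_strict_mono_ex1) (auto simp: order_less_le)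
  with assms(3) show False
    by simp
qed

lemma block_deg_eq_imp_lookup_eq:
  assumes "mdvd u v" "block_deg k u i = block_deg k v i" "j < k i"
  shows "Poly_Mapping.lookup u (i, j) = Poly_Mapping.lookup v (i, j)"
  using sum_le_eq_imp_eq[of "{..<k i}" "\<lambda>j. Poly_Mapping.lookup u (i, j)" "\<lambda>j. Poly_Mapping.lookup v (i, j)" j]
    assms unfolding block_deg_def mdvd_def by simp

lemma block_exps_empty: "block_exps k {} c = {0}"
  by (auto simp: block_exps_def)

lemma block_exps_insert:
  assumes "i \<notin> S"
  shows "block_exps k (insert i S) c = block_exps k {i} c + block_exps k S c"
proof (intro set_eqI iffI)
  fix v assume v: "v \<in> block_exps k (insert i S) c"
  define s where "s = restrict_exps v ({i} \<times> {..<k i})"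
  have s: "Poly_Mapping.lookup s x = (if x \<in> {i} \<times> {..<k i} then Poly_Mapping.lookup v x else 0)" for x
    unfolding s_def by (rule lookup_restrict_exps)
  have split: "v = s + (v - s)"
    by (intro poly_mapping_eqI) (simp add: lookup_add lookup_minus s)
  have "Poly_Mapping.keys s \<subseteq> Sigma {i} (\<lambda>i. {..<k i})"
    by (auto simp: in_keys_iff s split: if_splits)
  moreover have "block_deg k s i = block_deg k v i"
    unfolding block_deg_def by (intro sum.cong) (simp_all add: s)
  ultimately have s_in: "s \<in> block_exps k {i} c"
    using v by (simp add: block_exps_def)
  have "Poly_Mapping.keys (v - s) \<subseteq> Sigma S (\<lambda>i. {..<k i})"
  proof
    fix x assume x: "x \<in> Poly_Mapping.keys (v - s)"
    then have "x \<notin> {i} \<times> {..<k i}"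
      by (auto simp: in_keys_iff lookup_minus s)
    moreover have "x \<in> Sigma (insert i S) (\<lambda>i. {..<k i})"
      using x keys_diff_subset[of v s] v by (auto simp: block_exps_def)
    ultimately show "x \<in> Sigma S (\<lambda>i. {..<k i})"
      by auto
  qed
  moreover have "block_deg k (v - s) i' = c i'" if "i' \<in> S" for i'
  proof -
    have "i' \<noteq> i"
      using assms that by auto
    with s_in have "block_deg k s i' = 0"
      using block_deg_outside[of s "{i}" k i'] by (simp add: block_exps_def)
    then show ?thesis
      using v that block_deg_add[of k s "v - s" i'] split by (simp add: block_exps_def)
  qed
  ultimately have "v - s \<in> block_exps k S c"
    by (simp add: block_exps_def)
  with s_in show "v \<in> block_exps k {i} c + block_exps k S c"
    by (subst split) (rule set_plus_intro)
next
  fix v assume "v \<in> block_exps k {i} c + block_exps k S c"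
  then obtain s y where v: "v = s + y" and s: "s \<in> block_exps k {i} c" and y: "y \<in> block_exps k S c"
    by (auto simp: set_plus_def)
  have "Poly_Mapping.keys v \<subseteq> Sigma (insert i S) (\<lambda>i. {..<k i})"
    using s y unfolding v keys_add_nat by (auto simp: block_exps_def)
  moreover have "block_deg k v i' = c i'" if "i' \<in> insert i S" for i'
  proof (cases "i' = i")
    case True
    then have "block_deg k y i' = 0"
      using y assms block_deg_outside[of y S k i'] by (simp add: block_exps_def)
    with True s show ?thesis
      by (simp add: v block_deg_add block_exps_def)
  next
    case False
    then have "block_deg k s i' = 0"
      using s block_deg_outside[of s "{i}" k i'] by (simp add: block_exps_def)
    with False that y show ?thesis
      by (simp add: v block_deg_add block_exps_def)
  qed
  ultimately show "v \<in> block_exps k (insert i S) c"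
    by (simp add: block_exps_def)
qed

lemma sumset_pow_block_units: "sumset_pow (block_units k i) d = block_exps k {i} (\<lambda>_. d)"
proof (induction d)
  case 0
  show ?case
  proof (intro set_eqI iffI)
    fix v assume v: "v \<in> block_exps k {i} (\<lambda>_. 0)"
    then have zero: "Poly_Mapping.lookup v (i, j) = 0" if "j < k i" for j
      using that by (simp add: block_exps_def block_deg_def)
    have keys: "Poly_Mapping.keys v \<subseteq> Sigma {i} (\<lambda>i. {..<k i})"
      using v by (simp add: block_exps_def)
    have "x \<notin> Poly_Mapping.keys v" for x
    proof
      assume x: "x \<in> Poly_Mapping.keys v"
      with keys obtain j where "x = (i, j)" "j < k i"
        by blast
      with zero x show False
        by (simp add: in_keys_iff)
    qed
    then have "Poly_Mapping.keys v = {}"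
      by blast
    then show "v \<in> sumset_pow (block_units k i) 0"
      by simp
  qed (simp add: block_exps_def block_deg_def)
next
  case (Suc d)
  show ?case
  proof (intro set_eqI iffI)
    fix v assume "v \<in> sumset_pow (block_units k i) (Suc d)"
    then obtain j s where "j < k i" "v = Poly_Mapping.single (i, j) 1 + s" "s \<in> block_exps k {i} (\<lambda>_. d)"
      using Suc.IH by (auto simp: set_plus_def block_units_def)
    then show "v \<in> block_exps k {i} (\<lambda>_. Suc d)"
      by (auto simp: block_exps_def keys_add_nat block_deg_add block_deg_single)
  next
    fix v assume v: "v \<in> block_exps k {i} (\<lambda>_. Suc d)"
    then obtain j where j: "j < k i" "Poly_Mapping.lookup v (i, j) \<noteq> 0"
      using block_deg_pos_imp_lookup[of k v i] by (auto simp: block_exps_def)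
    let ?e = "Poly_Mapping.single (i, j) (1::nat)"
    have split: "v = (v - ?e) + ?e"
      using diff_single_add[OF j(2)] by simp
    have "Suc d = block_deg k v i"
      using v by (simp add: block_exps_def)
    also have "\<dots> = block_deg k (v - ?e) i + 1"
      using j(1) by (subst split) (simp only: block_deg_add block_deg_single, simp)
    finally have "v - ?e \<in> block_exps k {i} (\<lambda>_. d)"
      using v keys_diff_subset[of v ?e] by (auto simp: block_exps_def)
    moreover have "?e \<in> block_units k i"
      using j(1) by (simp add: block_units_def)
    ultimately show "v \<in> sumset_pow (block_units k i) (Suc d)"
      using Suc.IH split by (metis add.commute set_plus_intro sumset_pow.simps(2))
  qed
qed

lemma block_exps_singleton: "block_exps k {i} c = sumset_pow (block_units k i) (c i)"
  by (simp add: sumset_pow_block_units block_exps_def)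

lemma finite_sumset_pow: "finite B \<Longrightarrow> finite (sumset_pow B d)"
  by (induction d) (simp_all add: finite_set_plus)

lemma finite_block_exps: "finite S \<Longrightarrow> finite (block_exps k S c)"
  by (induction rule: finite_induct)
    (simp_all add: block_exps_empty block_exps_insert block_exps_singleton finite_set_plus
      finite_sumset_pow block_units_def)

lemma expvars_eq_Sigma: "expvars n k = Sigma {..<n} (\<lambda>i. {..<k i})"
  by (auto simp: expvars_def)

lemma Pideal_eq_monideal: "Pideal n k i = monideal (expvars n k) (block_units k i)"
  unfolding Pideal_def monideal_def block_units_def var_def
  by (simp add: image_image setcompr_eq_image lessThan_def)

lemma expansion_factor_eq_monideal:
  assumes "distinct is" "set is \<subseteq> {..<n}"
  shows "foldr (\<lambda>i J. ideal_mult (expvars n k) (ideal_pow (expvars n k) (Pideal n k i) (Poly_Mapping.lookup a i)) J)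
           is (ideal_gen (expvars n k) {1})
         = (monideal (expvars n k) (block_exps k (set is) (Poly_Mapping.lookup a))
              :: (nat \<times> nat, 'k::comm_ring_1) mpoly set)"
  using assms
proof (induction "is")
  case Nil
  show ?case
    by (simp add: block_exps_empty monideal_def mon_def)
next
  case (Cons i "is")
  let ?V = "expvars n k"
  have units: "exps_in ?V (block_units k i)"
    using Cons.prems by (auto simp: exps_in_def block_units_def expvars_def)
  have "exps_in ?V (block_exps k (set is) (Poly_Mapping.lookup a))"
    using Cons.prems by (fastforce simp: exps_in_def block_exps_def expvars_eq_Sigma)
  then show ?case
    using Cons by (simp add: Pideal_eq_monideal ideal_pow_monideal[OF units] monideal_mult
        exps_in_sumset_pow[OF units] block_exps_insert block_exps_singleton)
qed

lemma expansion_eq_monideal: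
  "expansion n k (I :: (nat, 'k::comm_ring_1) mpoly set)
     = monideal (expvars n k) (\<Union>a\<in>min_gens {..<n} I. expansion_gens n k a)"
  unfolding expansion_def
  using expansion_factor_eq_monideal[of "[0..<n]" n k, where 'k='k]
  by (simp add: ideal_gen_UN_monideal lessThan_atLeast0)

lemma exps_in_expansion_gens: "exps_in (expvars n k) (\<Union>a\<in>G. expansion_gens n k a)"
  by (auto simp: exps_in_def block_exps_def expvars_eq_Sigma)

lemma mdvd_antichain_expansion_gens:
  assumes "mdvd_antichain G" "exps_in {..<n} G"
  shows "mdvd_antichain (\<Union>a\<in>G. expansion_gens n k a)"
  unfolding mdvd_antichain_def
proof (intro ballI impI)
  fix t' t assume "t' \<in> (\<Union>a\<in>G. expansion_gens n k a)" "t \<in> (\<Union>a\<in>G. expansion_gens n k a)"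
    and d: "mdvd t' t"
  then obtain a' a where a': "a' \<in> G" "t' \<in> expansion_gens n k a'" and a: "a \<in> G" "t \<in> expansion_gens n k a"
    by blast
  have "Poly_Mapping.lookup a' i \<le> Poly_Mapping.lookup a i" for i
  proof (cases "i < n")
    case True
    then show ?thesis
      using block_deg_mono[OF d, of k i] a'(2) a(2) by (simp add: block_exps_def)
  next
    case False
    then have "Poly_Mapping.lookup a' i = 0"
      using assms(2) a'(1) lookup_eq_0_outside[of a' "{..<n}"] by (simp add: exps_in_def)
    then show ?thesis
      by simp
  qed
  then have "a' = a"
    using assms(1) a(1) a'(1) unfolding mdvd_antichain_def mdvd_def by blast
  show "t' = t"
  proof (rule poly_mapping_eqI)
    fix x :: "nat \<times> nat"
    show "Poly_Mapping.lookup t' x = Poly_Mapping.lookup t x"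
    proof (cases "x \<in> expvars n k")
      case True
      then obtain i j where x: "x = (i, j)" "i < n" "j < k i"
        by (auto simp: expvars_def)
      then have "block_deg k t' i = block_deg k t i"
        using a'(2) a(2) \<open>a' = a\<close> by (simp add: block_exps_def)
      with x show ?thesis
        using block_deg_eq_imp_lookup_eq[OF d] by simp
    next
      case False
      with a'(2) a(2) show ?thesis
        using lookup_eq_0_outside by (metis (no_types, lifting) block_exps_def expvars_eq_Sigma mem_Collect_eq)
    qed
  qed
qed

lemma expansion_gens_keys: "v \<in> expansion_gens n k a \<Longrightarrow> Poly_Mapping.keys v \<subseteq> expvars n k"
  by (simp add: block_exps_def expvars_eq_Sigma)

lemma expansion_gens_block_deg:
  "v \<in> expansion_gens n k a \<Longrightarrow> i < n \<Longrightarrow> block_deg k v i = Poly_Mapping.lookup a i"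
  by (simp add: block_exps_def)

lemma mem_expansion_gensI:
  "Poly_Mapping.keys v \<subseteq> expvars n k \<Longrightarrow> (\<And>i. i < n \<Longrightarrow> block_deg k v i = Poly_Mapping.lookup a i)
    \<Longrightarrow> v \<in> expansion_gens n k a"
  by (simp add: block_exps_def expvars_eq_Sigma)

section \<open>Lifting an order with linear quotients to the expansion\<close>

lemma exists_mdvd_with_block_degs:
  assumes "\<forall>l<n. c l \<le> block_deg k y l"
  shows "\<exists>u. mdvd u y \<and> (\<forall>l<n. block_deg k u l = c l)"
  using assms
proof (induction "\<Sum>l<n. block_deg k y l - c l" arbitrary: y rule: less_induct)
  case less
  show ?case
  proof (cases "\<forall>l<n. block_deg k y l = c l")
    case False
    then obtain l where "l < n" "block_deg k y l \<noteq> c l"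
      by blast
    with less.prems have l: "l < n" "c l < block_deg k y l"
      by (auto simp: order_le_neq_trans)
    then obtain j where j: "j < k l" "Poly_Mapping.lookup y (l, j) \<noteq> 0"
      using block_deg_pos_imp_lookup[of k y l] by auto
    define y' where "y' = y - Poly_Mapping.single (l, j) 1"
    have y: "y = y' + Poly_Mapping.single (l, j) 1"
      unfolding y'_def using diff_single_add[OF j(2)] by simp
    have deg: "block_deg k y l' = block_deg k y' l' + (if l = l' then 1 else 0)" for l'
      using j(1) by (subst y, simp only: block_deg_add block_deg_single) auto
    have "\<forall>l'<n. c l' \<le> block_deg k y' l'"
      using less.prems l deg by (metis add.right_neutral add_le_imp_le_left less_Suc_eq_le Suc_eq_plus1)
    moreover have "(\<Sum>l<n. block_deg k y' l - c l) < (\<Sum>l<n. block_deg k y l - c l)"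
      using l deg by (intro sum_strict_mono_ex1) (auto simp: diff_le_mono)
    ultimately obtain u where "mdvd u y'" "\<forall>l<n. block_deg k u l = c l"
      using less.hyps by blast
    moreover have "mdvd y' y"
      using y mdvd_add_right by simp
    ultimately show ?thesis
      using mdvd_trans by blast
  qed (use mdvd_refl in blast)
qed

lemma block_deg_less_imp_lookup_less:
  assumes "block_deg k y i < block_deg k t i"
  obtains j where "j < k i" "Poly_Mapping.lookup y (i, j) < Poly_Mapping.lookup t (i, j)"
  using assms unfolding block_deg_def by (meson lessThan_iff not_less sum_mono)

text \<open>An exchange step \<open>b' - a = e\<^sub>i\<close> between minimal generators of \<open>I\<close> lifts to the expansion: lower
  \<open>y\<close> to a divisor with the block degrees of \<open>b'\<close>, except in block \<open>i\<close>, and multiply by a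
  variable of block \<open>i\<close> in which \<open>t\<close> exceeds \<open>y\<close>.\<close>

lemma expansion_gens_exchange_across:
  assumes y: "y \<in> expansion_gens n k a" and t: "t \<in> expansion_gens n k b"
    and b': "b' - a = Poly_Mapping.single i 1" "Poly_Mapping.lookup a i < Poly_Mapping.lookup b i"
    and b: "Poly_Mapping.keys b \<subseteq> {..<n}"
  shows "\<exists>t'\<in>expansion_gens n k b'. \<exists>w. t' - y = Poly_Mapping.single w 1
                                           \<and> Poly_Mapping.lookup y w < Poly_Mapping.lookup t w"
proof -
  have "i \<in> Poly_Mapping.keys b"
    using b'(2) by (simp add: in_keys_iff)
  with b have i: "i < n"
    by blast
  have "block_deg k y i < block_deg k t i"
    using b'(2) by (simp add: expansion_gens_block_deg[OF y i] expansion_gens_block_deg[OF t i])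
  then obtain j where j: "j < k i" "Poly_Mapping.lookup y (i, j) < Poly_Mapping.lookup t (i, j)"
    by (rule block_deg_less_imp_lookup_less)
  have b'_other: "Poly_Mapping.lookup b' l \<le> Poly_Mapping.lookup a l" if "l \<noteq> i" for l
    using arg_cong[OF b'(1), of "\<lambda>p. Poly_Mapping.lookup p l"] that
    by (simp add: lookup_minus lookup_single)
  have b'_i: "Poly_Mapping.lookup b' i = Poly_Mapping.lookup a i + 1"
    using arg_cong[OF b'(1), of "\<lambda>p. Poly_Mapping.lookup p i"] by (simp add: lookup_minus)
  define c where "c l = (if l = i then block_deg k y i else Poly_Mapping.lookup b' l)" for l
  have "\<forall>l<n. c l \<le> block_deg k y l"
    using b'_other by (simp add: c_def expansion_gens_block_deg[OF y])
  then obtain u where u: "mdvd u y" "\<forall>l<n. block_deg k u l = c l"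
    using exists_mdvd_with_block_degs by blast
  define t' where "t' = u + Poly_Mapping.single (i, j) 1"
  have "t' \<in> expansion_gens n k b'"
  proof (rule mem_expansion_gensI)
    show "Poly_Mapping.keys t' \<subseteq> expvars n k"
      using mdvd_keys[OF u(1)] expansion_gens_keys[OF y] i j(1)
      by (auto simp: t'_def keys_add_nat expvars_def)
    show "block_deg k t' l = Poly_Mapping.lookup b' l" if "l < n" for l
      using u(2) that j(1) b'_i by (auto simp: t'_def c_def block_deg_add block_deg_single
          expansion_gens_block_deg[OF y i])
  qed
  moreover have "Poly_Mapping.lookup u (i, j) = Poly_Mapping.lookup y (i, j)"
    using block_deg_eq_imp_lookup_eq[of u y k i j] u i j(1) by (simp add: c_def)
  then have "t' - y = Poly_Mapping.single (i, j) 1"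
    using u(1) unfolding mdvd_def
    by (intro poly_mapping_eqI) (auto simp: t'_def lookup_add lookup_minus lookup_single when_def)
  ultimately show ?thesis
    using j(2) by blast
qed

lemma sum_eq_first_less_imp_later_greater:
  fixes f g :: "nat \<Rightarrow> nat"
  assumes "sum f {..<m} = sum g {..<m}" "j < m" "f j < g j" "\<forall>j'<j. f j' = g j'"
  obtains j' where "j < j'" "j' < m" "g j' < f j'"
proof (rule ccontr)
  assume "\<not> thesis"
  with that have "\<forall>j'\<in>{..<m}. f j' \<le> g j'"
    using assms(3,4) by (metis lessThan_iff linorder_neqE_nat not_less order.order_iff_strict)
  then have "sum f {..<m} < sum g {..<m}"
    using assms(2,3) by (intro sum_strict_mono_ex1) auto
  with assms(1) show False
    by simp
qed

text \<open>Within one set \<open>expansion_gens n k a\<close>, an exchange step towards a lexicographically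
  smaller element is obtained by moving one unit of \<open>y\<close>, in the block where \<open>t\<close> and \<open>y\<close> first
  differ, to a later position of that block.\<close>

lemma expansion_gens_exchange_within:
  assumes y: "y \<in> expansion_gens n k a" and t: "t \<in> expansion_gens n k a" and "t < y"
  shows "\<exists>t'\<in>expansion_gens n k a. t' < y \<and> (\<exists>w. t' - y = Poly_Mapping.single w 1
                                                 \<and> Poly_Mapping.lookup y w < Poly_Mapping.lookup t w)"
proof -
  obtain x where x: "Poly_Mapping.lookup t x < Poly_Mapping.lookup y x"
      "\<And>x'. x' < x \<Longrightarrow> Poly_Mapping.lookup t x' = Poly_Mapping.lookup y x'"
    using \<open>t < y\<close> unfolding less_poly_mapping.rep_eq less_fun_def by blast
  obtain i j where ij: "x = (i, j)"
    by (cases x)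
  have "x \<in> Poly_Mapping.keys y"
    using x(1) by (simp add: in_keys_iff)
  then have i: "i < n" "j < k i"
    using expansion_gens_keys[OF y] ij by (auto simp: expvars_def)
  have "(\<Sum>j<k i. Poly_Mapping.lookup t (i, j)) = (\<Sum>j<k i. Poly_Mapping.lookup y (i, j))"
    using expansion_gens_block_deg[OF y i(1)] expansion_gens_block_deg[OF t i(1)]
    by (simp add: block_deg_def)
  moreover have "\<forall>j''<j. Poly_Mapping.lookup t (i, j'') = Poly_Mapping.lookup y (i, j'')"
    using x(2) ij by simp
  ultimately obtain j' where j': "j < j'" "j' < k i"
      "Poly_Mapping.lookup y (i, j') < Poly_Mapping.lookup t (i, j')"
    using x(1) ij i(2) by (elim sum_eq_first_less_imp_later_greater) simp_all
  let ?w = "(i, j')"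
  define y0 where "y0 = y - Poly_Mapping.single x 1"
  define t' where "t' = y0 + Poly_Mapping.single ?w 1"
  have y_split: "y = y0 + Poly_Mapping.single x 1"
    unfolding y0_def using x(1) diff_single_add[of y x] by simp
  have lookup_t': "Poly_Mapping.lookup t' z
      = Poly_Mapping.lookup y z - (if z = x then 1 else 0) + (if z = ?w then 1 else 0)" for z
    by (simp add: t'_def y0_def lookup_add lookup_minus lookup_single when_def)
  have "x < ?w"
    using ij j'(1) by simp
  have "t' \<in> expansion_gens n k a"
  proof (rule mem_expansion_gensI)
    show "Poly_Mapping.keys t' \<subseteq> expvars n k"
      using expansion_gens_keys[OF y] i j'(2) keys_diff_subset[of y "Poly_Mapping.single x 1"]
      by (auto simp: t'_def y0_def keys_add_nat expvars_def)
    fix l assume "l < n"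
    have "block_deg k y l = block_deg k y0 l + (if i = l then 1 else 0)"
      using i(2) by (subst y_split) (auto simp: ij block_deg_add block_deg_single)
    then show "block_deg k t' l = Poly_Mapping.lookup a l"
      using expansion_gens_block_deg[OF y \<open>l < n\<close>] j'(2)
      by (auto simp: t'_def block_deg_add block_deg_single)
  qed
  moreover have "t' < y"
    unfolding less_poly_mapping.rep_eq less_fun_def
  proof (intro exI conjI allI impI)
    show "Poly_Mapping.lookup t' x < Poly_Mapping.lookup y x"
      using lookup_t'[of x] x(1) \<open>x < ?w\<close> by simp
    fix x' assume "x' < x"
    with \<open>x < ?w\<close> show "Poly_Mapping.lookup t' x' = Poly_Mapping.lookup y x'"
      using lookup_t'[of x'] by auto
  qed
  moreover have "t' - y = Poly_Mapping.single ?w 1"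
  proof (rule poly_mapping_eqI)
    fix z
    show "Poly_Mapping.lookup (t' - y) z = Poly_Mapping.lookup (Poly_Mapping.single ?w 1) z"
      using lookup_t'[of z] \<open>x < ?w\<close>
      by (cases "z = x"; cases "z = ?w") (auto simp: lookup_minus lookup_single when_def)
  qed
  ultimately show ?thesis
    using j'(3) by blast
qed

definition block_degs :: "nat \<Rightarrow> (nat \<Rightarrow> nat) \<Rightarrow> (nat \<times> nat \<Rightarrow>\<^sub>0 nat) \<Rightarrow> (nat \<Rightarrow>\<^sub>0 nat)" where
  "block_degs n k t = Abs_poly_mapping (\<lambda>i. if i < n then block_deg k t i else 0)"

lemma block_degs_expansion_gens:
  assumes "Poly_Mapping.keys a \<subseteq> {..<n}" "t \<in> expansion_gens n k a"
  shows "block_degs n k t = a"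
proof -
  have "finite {i. (if i < n then block_deg k t i else 0) \<noteq> 0}"
    by (rule finite_subset[of _ "{..<n}"]) auto
  then show ?thesis
    using assms expansion_gens_block_deg[OF assms(2)] lookup_eq_0_outside[OF assms(1)]
    by (intro poly_mapping_eqI) (simp add: block_degs_def)
qed

lemma lin_quot_order_expansion_gens:
  fixes key :: "(nat \<Rightarrow>\<^sub>0 nat) \<Rightarrow> 'b::linorder"
  assumes G: "exps_in {..<n} G" and inj: "inj_on key G" and lq: "lin_quot_order (\<lambda>a b. key a < key b) G"
  shows "lin_quot_order (\<lambda>s t. (key (block_degs n k s), s) < (key (block_degs n k t), t))
           (\<Union>a\<in>G. expansion_gens n k a)"
  unfolding lin_quot_order_def lin_quot_step_def
proof (intro ballI, elim CollectE conjE)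
  let ?T = "\<Union>a\<in>G. expansion_gens n k a"
  let ?key = "\<lambda>t. (key (block_degs n k t), t)"
  fix y t assume "y \<in> ?T" "t \<in> ?T" and less: "?key t < ?key y"
  then obtain a b where a: "a \<in> G" "y \<in> expansion_gens n k a" and b: "b \<in> G" "t \<in> expansion_gens n k b"
    by blast
  have keys: "Poly_Mapping.keys c \<subseteq> {..<n}" if "c \<in> G" for c
    using G that by (simp add: exps_in_def)
  have key_y: "block_degs n k y = a" and key_t: "block_degs n k t = b"
    using block_degs_expansion_gens keys a b by blast+
  show "\<exists>t'\<in>{t \<in> ?T. ?key t < ?key y}. \<exists>w. t' - y = Poly_Mapping.single w 1
          \<and> Poly_Mapping.lookup y w < Poly_Mapping.lookup t w"
  proof (cases "key b < key a")
    case True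
    then obtain b' w where b': "b' \<in> G" "key b' < key a" "b' - a = Poly_Mapping.single w 1"
        "Poly_Mapping.lookup a w < Poly_Mapping.lookup b w"
      using lq a(1) b(1) unfolding lin_quot_order_def lin_quot_step_def by blast
    then obtain t' where "t' \<in> expansion_gens n k b'" "\<exists>w. t' - y = Poly_Mapping.single w 1
        \<and> Poly_Mapping.lookup y w < Poly_Mapping.lookup t w"
      using expansion_gens_exchange_across[OF a(2) b(2) _ _ keys[OF b(1)]] by blast
    moreover from this have "?key t' < ?key y"
      using block_degs_expansion_gens[OF keys[OF b'(1)]] b'(2) key_y by simp
    ultimately show ?thesis
      using b'(1) by blast
  next
    case False
    with less have "b = a" "t < y"
      using inj a(1) b(1) key_y key_t by (auto simp: inj_on_def)
    then obtain t' where "t' \<in> expansion_gens n k a" "t' < y" "\<exists>w. t' - y = Poly_Mapping.single w 1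
        \<and> Poly_Mapping.lookup y w < Poly_Mapping.lookup t w"
      using expansion_gens_exchange_within[OF a(2)] b(2) by blast
    moreover from this have "?key t' < ?key y"
      using block_degs_expansion_gens[OF keys[OF a(1)]] key_y by simp
    ultimately show ?thesis
      using a(1) by blast
  qed
qed

section \<open>Descending from the expansion to the ideal\<close>

definition first_col :: "(nat \<Rightarrow>\<^sub>0 nat) \<Rightarrow> (nat \<times> nat \<Rightarrow>\<^sub>0 nat)" where
  "first_col a = Abs_poly_mapping (\<lambda>x. if snd x = 0 then Poly_Mapping.lookup a (fst x) else 0)"

lemma lookup_first_col:
  "Poly_Mapping.lookup (first_col a) x = (if snd x = 0 then Poly_Mapping.lookup a (fst x) else 0)"
proof -
  have "{x :: nat \<times> nat. (if snd x = 0 then Poly_Mapping.lookup a (fst x) else 0) \<noteq> 0}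
          \<subseteq> (\<lambda>i. (i, 0)) ` Poly_Mapping.keys a"
    by (auto simp: in_keys_iff image_iff split: if_splits intro: prod_eqI)
  then show ?thesis
    unfolding first_col_def by (simp add: finite_subset)
qed

lemma inj_first_col: "inj first_col"
proof (rule injI)
  fix a b assume "first_col a = first_col b"
  then have "Poly_Mapping.lookup (first_col a) (i, 0) = Poly_Mapping.lookup (first_col b) (i, 0)" for i
    by simp
  then show "a = b"
    by (intro poly_mapping_eqI) (simp add: lookup_first_col)
qed

lemma first_col_diff: "first_col (a - b) = first_col a - first_col b"
  by (intro poly_mapping_eqI) (simp add: lookup_first_col lookup_minus)

lemma first_col_eq_single:
  assumes "first_col c = Poly_Mapping.single w 1"
  obtains i where "w = (i, 0)" "c = Poly_Mapping.single i 1"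
proof -
  have "Poly_Mapping.lookup (first_col c) w = 1"
    using assms by simp
  then obtain i where w: "w = (i, 0)"
    by (cases w) (auto simp: lookup_first_col split: if_splits)
  have "Poly_Mapping.lookup c i' = Poly_Mapping.lookup (Poly_Mapping.single i 1) i'" for i'
    using arg_cong[OF assms, of "\<lambda>p. Poly_Mapping.lookup p (i', 0)"] w
    by (simp add: lookup_first_col lookup_single when_def)
  then show ?thesis
    using that w poly_mapping_eqI by blast
qed

lemma sum_lessThan_eq_first:
  fixes f :: "nat \<Rightarrow> nat"
  assumes "0 < m" "\<And>j. 0 < j \<Longrightarrow> f j = 0"
  shows "(\<Sum>j<m. f j) = f 0"
  using assms by (subst sum.mono_neutral_right[of "{..<m}" "{0}"]) auto

lemma first_col_in_expansion_gens:
  assumes "\<forall>i<n. 1 \<le> k i" "Poly_Mapping.keys a \<subseteq> {..<n}"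
  shows "first_col a \<in> expansion_gens n k a"
proof (rule mem_expansion_gensI)
  show "Poly_Mapping.keys (first_col a) \<subseteq> expvars n k"
  proof
    fix x assume "x \<in> Poly_Mapping.keys (first_col a)"
    then have "snd x = 0" "fst x \<in> Poly_Mapping.keys a"
      by (auto simp: in_keys_iff lookup_first_col split: if_splits)
    with assms show "x \<in> expvars n k"
      by (cases x) (auto simp: expvars_def Suc_le_eq)
  qed
  show "block_deg k (first_col a) i = Poly_Mapping.lookup a i" if "i < n" for i
    using assms(1) that sum_lessThan_eq_first[of "k i" "\<lambda>j. Poly_Mapping.lookup (first_col a) (i, j)"]
    by (simp add: block_deg_def lookup_first_col Suc_le_eq)
qed

definition in_first_col :: "(nat \<times> nat \<Rightarrow>\<^sub>0 nat) \<Rightarrow> bool" where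
  "in_first_col t \<longleftrightarrow> Poly_Mapping.keys t \<subseteq> {x. snd x = 0}"

lemma expansion_gens_in_first_col:
  assumes "\<forall>i<n. 1 \<le> k i" "Poly_Mapping.keys a \<subseteq> {..<n}" "t \<in> expansion_gens n k a" "in_first_col t"
  shows "t = first_col a"
proof (rule poly_mapping_eqI)
  fix x :: "nat \<times> nat"
  obtain i j where x: "x = (i, j)"
    by (cases x)
  have zero: "Poly_Mapping.lookup t (i', j') = 0" if "j' \<noteq> 0" for i' j'
    using assms(4) that by (auto simp: in_first_col_def in_keys_iff)
  show "Poly_Mapping.lookup t x = Poly_Mapping.lookup (first_col a) x"
  proof (cases "j = 0 \<and> i < n")
    case True
    then have "0 < k i"
      using assms(1) by (simp add: Suc_le_eq)
    then have "block_deg k t i = Poly_Mapping.lookup t (i, 0)"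
      using zero sum_lessThan_eq_first[of "k i" "\<lambda>j. Poly_Mapping.lookup t (i, j)"]
      by (simp add: block_deg_def)
    with True show ?thesis
      using expansion_gens_block_deg[OF assms(3)] x by (simp add: lookup_first_col)
  next
    case False
    moreover have "Poly_Mapping.lookup t (i, 0) = 0" if "\<not> i < n"
      using that expansion_gens_keys[OF assms(3)] lookup_eq_0_outside[of t "expvars n k"]
      by (simp add: expvars_def)
    ultimately show ?thesis
      using zero x lookup_eq_0_outside[OF assms(2)] by (auto simp: lookup_first_col)
  qed
qed

lemma in_first_col_first_col: "in_first_col (first_col a)"
  by (auto simp: in_first_col_def in_keys_iff lookup_first_col split: if_splits)

lemma first_col_expansion_gens:
  assumes "\<forall>i<n. 1 \<le> k i" "exps_in {..<n} G"
  shows "{t \<in> (\<Union>a\<in>G. expansion_gens n k a). in_first_col t} = first_col ` G"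
proof (intro equalityI subsetI)
  fix t assume "t \<in> {t \<in> (\<Union>a\<in>G. expansion_gens n k a). in_first_col t}"
  then obtain a where a: "a \<in> G" "t \<in> expansion_gens n k a" "in_first_col t"
    by blast
  then have "t = first_col a"
    using expansion_gens_in_first_col[OF assms(1)] assms(2) by (simp add: exps_in_def)
  with a(1) show "t \<in> first_col ` G"
    by blast
next
  fix t assume "t \<in> first_col ` G"
  then obtain a where a: "a \<in> G" "t = first_col a"
    by blast
  then have "t \<in> expansion_gens n k a"
    using first_col_in_expansion_gens[OF assms(1)] assms(2) by (simp add: exps_in_def)
  with a show "t \<in> {t \<in> (\<Union>a\<in>G. expansion_gens n k a). in_first_col t}"
    using in_first_col_first_col by blast
qed

lemma lin_quot_order_restrict:
  assumes "lin_quot_order prec X"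
    and closed: "\<And>u a a' w. Q u \<Longrightarrow> Q a \<Longrightarrow> a' - u = Poly_Mapping.single w 1
                   \<Longrightarrow> Poly_Mapping.lookup u w < Poly_Mapping.lookup a w \<Longrightarrow> Q a'"
  shows "lin_quot_order prec {x \<in> X. Q x}"
  unfolding lin_quot_order_def lin_quot_step_def
proof (intro ballI, elim CollectE conjE)
  fix y t assume "y \<in> X" "Q y" "t \<in> X" "Q t" "prec t y"
  then obtain t' w where t': "t' \<in> X" "prec t' y" "t' - y = Poly_Mapping.single w 1"
      "Poly_Mapping.lookup y w < Poly_Mapping.lookup t w"
    using assms(1) unfolding lin_quot_order_def lin_quot_step_def by blast
  moreover have "Q t'"
    using closed[OF \<open>Q y\<close> \<open>Q t\<close> t'(3,4)] .
  ultimately show "\<exists>t'\<in>{t \<in> {x \<in> X. Q x}. prec t y}. \<exists>w. t' - y = Poly_Mapping.single w 1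
                     \<and> Poly_Mapping.lookup y w < Poly_Mapping.lookup t w"
    by blast
qed

lemma in_first_col_exchange:
  assumes "in_first_col u" "in_first_col a" "a' - u = Poly_Mapping.single w 1"
    "Poly_Mapping.lookup u w < Poly_Mapping.lookup a w"
  shows "in_first_col a'"
proof -
  have "w \<in> Poly_Mapping.keys a"
    using assms(4) by (simp add: in_keys_iff)
  then have "snd w = 0"
    using assms(2) by (auto simp: in_first_col_def)
  moreover have "Poly_Mapping.keys a' \<subseteq> Poly_Mapping.keys (a' - u) \<union> Poly_Mapping.keys u"
    by (auto simp: in_keys_iff lookup_minus)
  ultimately show ?thesis
    using assms(1,3) by (auto simp: in_first_col_def)
qed

lemma lin_quot_order_first_col_image:
  assumes "lin_quot_order prec (first_col ` G)"
  shows "lin_quot_order (\<lambda>a b. prec (first_col a) (first_col b)) G"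
  unfolding lin_quot_order_def lin_quot_step_def
proof (intro ballI, elim CollectE conjE)
  fix y t assume "y \<in> G" "t \<in> G" "prec (first_col t) (first_col y)"
  then obtain t' w where "t' \<in> G" "prec (first_col t') (first_col y)"
      "first_col (t' - y) = Poly_Mapping.single w 1"
      "Poly_Mapping.lookup (first_col y) w < Poly_Mapping.lookup (first_col t) w"
    using assms unfolding lin_quot_order_def lin_quot_step_def first_col_diff by blast
  moreover from this(3) obtain i where "w = (i, 0)" "t' - y = Poly_Mapping.single i 1"
    by (rule first_col_eq_single)
  ultimately show "\<exists>t'\<in>{t \<in> G. prec (first_col t) (first_col y)}. \<exists>w. t' - y = Poly_Mapping.single w 1
                     \<and> Poly_Mapping.lookup y w < Poly_Mapping.lookup t w"
    by (auto simp: lookup_first_col)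
qed

lemma lin_quot_order_from_expansion_gens:
  assumes "\<forall>i<n. 1 \<le> k i" "exps_in {..<n} G" "lin_quot_order prec (\<Union>a\<in>G. expansion_gens n k a)"
  shows "lin_quot_order (\<lambda>a b. prec (first_col a) (first_col b)) G"
proof (rule lin_quot_order_first_col_image)
  have "lin_quot_order prec {t \<in> (\<Union>a\<in>G. expansion_gens n k a). in_first_col t}"
    by (rule lin_quot_order_restrict[OF assms(3)]) (rule in_first_col_exchange)
  then show "lin_quot_order prec (first_col ` G)"
    unfolding first_col_expansion_gens[OF assms(1,2)] .
qed

lemma lin_quot_list_expansion_gens_iff:
  assumes "\<forall>i<n. 1 \<le> k i" "exps_in {..<n} G"
  shows "(\<exists>us. distinct us \<and> set us = G \<and> lin_quot_list us)
           \<longleftrightarrow> (\<exists>vs. distinct vs \<and> set vs = (\<Union>a\<in>G. expansion_gens n k a) \<and> lin_quot_list vs)"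
proof
  assume "\<exists>us. distinct us \<and> set us = G \<and> lin_quot_list us"
  then obtain us where us: "distinct us" "set us = G" "lin_quot_list us"
    by blast
  let ?key = "\<lambda>t. (list_pos us (block_degs n k t), t)"
  have "lin_quot_order (\<lambda>s t. ?key s < ?key t) (\<Union>a\<in>G. expansion_gens n k a)"
    using lin_quot_order_expansion_gens[OF assms(2)] lin_quot_list_imp_order[OF us(1,3)]
      inj_on_list_pos[OF us(1)] us(2) by blast
  moreover have "finite (\<Union>a\<in>G. expansion_gens n k a)"
    using us(2) by (auto intro: finite_block_exps)
  moreover have "inj_on ?key (\<Union>a\<in>G. expansion_gens n k a)"
    by (rule inj_onI) simp
  ultimately show "\<exists>vs. distinct vs \<and> set vs = (\<Union>a\<in>G. expansion_gens n k a) \<and> lin_quot_list vs"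
    by (rule lin_quot_order_imp_list[rotated 2])
next
  assume "\<exists>vs. distinct vs \<and> set vs = (\<Union>a\<in>G. expansion_gens n k a) \<and> lin_quot_list vs"
  then obtain vs where vs: "distinct vs" "set vs = (\<Union>a\<in>G. expansion_gens n k a)" "lin_quot_list vs"
    by blast
  let ?key = "\<lambda>a. list_pos vs (first_col a)"
  have "lin_quot_order (\<lambda>a b. ?key a < ?key b) G"
    using lin_quot_order_from_expansion_gens[OF assms] lin_quot_list_imp_order[OF vs(1,3)] vs(2)
    by simp
  moreover have sub: "first_col ` G \<subseteq> set vs"
    using vs(2) first_col_expansion_gens[OF assms] by blast
  then have "finite G"
    using finite_imageD[OF _ inj_on_subset[OF inj_first_col]] finite_subset by blast
  moreover have "inj_on ?key G"
  proof (rule inj_onI)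
    fix a b assume "a \<in> G" "b \<in> G" "?key a = ?key b"
    with sub have "first_col a = first_col b"
      using inj_onD[OF inj_on_list_pos[OF vs(1)]] by blast
    then show "a = b"
      by (simp add: inj_first_col inj_eq)
  qed
  ultimately show "\<exists>us. distinct us \<and> set us = G \<and> lin_quot_list us"
    by (rule lin_quot_order_imp_list[rotated 2])
qed

theorem theorem1p7:
  fixes n :: nat and k :: "nat \<Rightarrow> nat" and I :: "(nat, 'k::field) mpoly set"
  assumes "\<forall>i<n. 1 \<le> k i"
    and "monomial_ideal {..<n} I"
  shows "has_lin_quot {..<n} I \<longleftrightarrow> has_lin_quot (expvars n k) (expansion n k I)"
proof -
  let ?G = "min_gens {..<n} I"
  have G: "exps_in {..<n} ?G" "I = monideal {..<n} ?G"
    by (rule monomial_ideal_eq_monideal_min_gens[OF assms(2)])+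
  have "has_lin_quot {..<n} I \<longleftrightarrow> (\<exists>us. distinct us \<and> set us = ?G \<and> lin_quot_list us)"
    by (subst G(2)) (rule has_lin_quot_monideal_iff[OF G(1) mdvd_antichain_min_gens])
  also have "\<dots> \<longleftrightarrow> (\<exists>vs. distinct vs \<and> set vs = (\<Union>a\<in>?G. expansion_gens n k a) \<and> lin_quot_list vs)"
    by (rule lin_quot_list_expansion_gens_iff[OF assms(1) G(1)])
  also have "\<dots> \<longleftrightarrow> has_lin_quot (expvars n k) (expansion n k I)"
    unfolding expansion_eq_monideal
    by (rule has_lin_quot_monideal_iff[OF exps_in_expansion_gens
          mdvd_antichain_expansion_gens[OF mdvd_antichain_min_gens G(1)], symmetric])
  finally show ?thesis .
qed

end
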